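(* Let $0<\alpha_1,\alpha_2\leq 1$ and $\theta=\frac{\alpha_2-\alpha_1}{\alpha_2+\alpha_1}$. If $f\in\mathcal{S}^*_t(\alpha_1,\alpha_2)$, then $$\mathrm{Re}\left\{\frac{zf'(z)}{f(z)}\right\}\geq\left(\frac{1-(2\cos\frac{\theta}{2}+1)r}{1-r}\right)^{(\alpha_1+\alpha_2)/2}\quad\text{for } 0\leq |z|=r\leq\frac{1}{2\cos\frac{\theta}{2}+1},$$ and $$0<\mathrm{Re}\left\{\frac{zf'(z)}{f(z)}\right\}\leq\left(\frac{1+(2\cos\frac{\theta}{2}-1)r}{1-r}\right)^{(\alpha_1+\alpha_2)/2}\quad\text{for } 0\leq |z|=r<1.$$
   Context: $\Delta=\{z\in\mathbb{C}:|z|<1\}$. $\mathcal{S}^*_t(\alpha_1,\alpha_2)$ denotes the class of functions $f$ analytic in $\Delta$ with $f(0)=0=f'(0)-1$ satisfying $-\frac{\pi\alpha_1}{2}<\arg\left\{\frac{zf'(z)}{f(z)}\right\}<\frac{\pi\alpha_2}{2}$ for all $z\in\Delta$. *)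

theory Defs
  imports "HOL-Analysis.Analysis"
begin

text \<open>The unit disc is ball 0 1. The quotient z f'(z)/f(z), extended to z = 0 by its
  limit value 1 (since f(0)=0, f'(0)=1).\<close>
definition starq :: "(complex \<Rightarrow> complex) \<Rightarrow> complex \<Rightarrow> complex" where
  "starq f z = (if z = 0 then 1 else z * deriv f z / f z)"

text \<open>The class S*_t(alpha1, alpha2): normalized analytic functions on the unit disc
  whose quantity z f'(z)/f(z) has argument strictly between -pi alpha1/2 and pi alpha2/2.
  The argument being defined requires f z \<noteq> 0 for z \<noteq> 0.\<close>
definition St :: "real \<Rightarrow> real \<Rightarrow> (complex \<Rightarrow> complex) set" where
  "St a1 a2 = {f. f holomorphic_on ball 0 1 \<and> f 0 = 0 \<and> deriv f 0 = 1 \<and>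
     (\<forall>z\<in>ball 0 1. z \<noteq> 0 \<longrightarrow> f z \<noteq> 0) \<and>
     (\<forall>z\<in>ball 0 1. - (pi * a1 / 2) < Arg (starq f z) \<and> Arg (starq f z) < pi * a2 / 2)}"

end

theory Submission
  imports Defs "HOL-Complex_Analysis.Complex_Analysis"
begin

text \<open>
  Let p = z f'/f, \<alpha> = (a1 + a2) / 2 and s = \<pi> \<theta> / 2. The values of p lie in the sector
  -\<pi> a1 / 2 < arg w < \<pi> a2 / 2, of opening \<pi> \<alpha> and bisected by the ray of angle \<alpha> s.
  This sector misses the negative real axis, so by the open mapping theorem p has no zeros,
  and P = p powr (1 / \<alpha>) = exp (Ln p / \<alpha>) is holomorphic with P 0 = 1 and values in the
  half-plane Re (P cis (- s)) > 0. Schwarz's lemma applied to a Cayley transform of the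
  normalised rotation of P gives |P - 1| \<le> 2 cos s r / (1 - r), and cos s \<le> cos (\<theta> / 2).
  The upper estimate follows from Re p \<le> |p| = |P| powr \<alpha>; the lower one from
  Re p = |P| powr \<alpha> cos (\<alpha> arg P) \<ge> (|P| cos (arg P)) powr \<alpha> = (Re P) powr \<alpha>,
  i.e. from cos x powr \<alpha> \<le> cos (\<alpha> x) for |x| < \<pi> / 2.
\<close>

lemma cos_powr_le_cos_mult_nonneg:
  fixes a x :: real
  assumes a: "0 < a" "a \<le> 1" and x: "0 \<le> x" "x < pi / 2"
  shows "cos x powr a \<le> cos (a * x)"
proof -
  have ax: "0 \<le> a * t" "a * t \<le> t" if "0 \<le> t" for t
    using that a mult_right_mono[of a 1 t] by auto
  have cos_pos: "0 < cos t" "0 < cos (a * t)" if "0 \<le> t" "t \<le> x" for t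
    using that x ax[of t] by (auto intro!: cos_gt_zero_pi)
  define h where "h t = ln (cos (a * t)) - a * ln (cos t)" for t
  have h_deriv: "(h has_real_derivative a * (tan t - tan (a * t))) (at t)" if "t \<in> {0..x}" for t
  proof -
    have "(h has_real_derivative - sin (a * t) * a / cos (a * t) - a * (- sin t / cos t)) (at t)"
      unfolding h_def using cos_pos[of t] that by (auto intro!: derivative_eq_intros)
    also have "- sin (a * t) * a / cos (a * t) - a * (- sin t / cos t) = a * (tan t - tan (a * t))"
      using cos_pos[of t] that by (simp add: tan_def field_simps)
    finally show ?thesis .
  qed
  have "tan (a * t) \<le> tan t" if "t \<in> {0..x}" for t
    using that ax[of t] x by (intro tan_mono_le) auto
  then have "h 0 \<le> h x"
    using a x by (intro deriv_nonneg_imp_mono[OF h_deriv]) auto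
  then have "a * ln (cos x) \<le> ln (cos (a * x))"
    by (simp add: h_def)
  then show ?thesis
    using cos_pos[of x] x by (simp add: powr_def ln_le_cancel_iff[symmetric] mult.commute)
qed

lemma cos_powr_le_cos_mult:
  fixes a x :: real
  assumes "0 < a" "a \<le> 1" "\<bar>x\<bar> < pi / 2"
  shows "cos x powr a \<le> cos (a * x)"
  using cos_powr_le_cos_mult_nonneg[OF assms(1,2), of "\<bar>x\<bar>"] assms(3)
  by (cases "x \<ge> 0") auto

lemma Re_exp_powr_le_Re_exp_scaleR:
  fixes a :: real and \<zeta> :: complex
  assumes "0 < a" "a \<le> 1" "\<bar>Im \<zeta>\<bar> < pi / 2"
  shows "Re (exp \<zeta>) powr a \<le> Re (exp (a *\<^sub>R \<zeta>))"
proof -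
  have "0 < cos (Im \<zeta>)"
    using assms(3) by (intro cos_gt_zero_pi) auto
  then have "Re (exp \<zeta>) powr a = exp (a * Re \<zeta>) * cos (Im \<zeta>) powr a"
    by (simp add: Re_exp powr_def ln_mult distrib_left exp_add)
  also have "\<dots> \<le> exp (a * Re \<zeta>) * cos (a * Im \<zeta>)"
    using cos_powr_le_cos_mult[OF assms] by simp
  also have "\<dots> = Re (exp (a *\<^sub>R \<zeta>))"
    by (simp add: Re_exp)
  finally show ?thesis .
qed

lemma norm_diff_one_less_norm_add_one:
  fixes w :: complex
  assumes "0 < Re w"
  shows "norm (w - 1) < norm (w + 1)"
proof -
  have "(Re w - 1)\<^sup>2 + (Im w)\<^sup>2 < (Re w + 1)\<^sup>2 + (Im w)\<^sup>2"
    using assms by (simp add: power2_eq_square algebra_simps)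
  then show ?thesis
    by (simp add: cmod_def)
qed

lemma norm_diff_one_le_if_Re_pos:
  fixes h :: "complex \<Rightarrow> complex"
  assumes hol: "h holomorphic_on ball 0 1" and h0: "h 0 = 1"
    and Re_pos: "\<And>z. z \<in> ball 0 1 \<Longrightarrow> 0 < Re (h z)"
    and z: "z \<in> ball 0 1"
  shows "norm (h z - 1) \<le> 2 * norm z / (1 - norm z)"
proof -
  define \<omega> where "\<omega> w = (h w - 1) / (h w + 1)" for w
  have less: "norm (h w - 1) < norm (h w + 1)" if "w \<in> ball 0 1" for w
    using norm_diff_one_less_norm_add_one[OF Re_pos[OF that]] .
  then have nonzero: "h w + 1 \<noteq> 0" if "w \<in> ball 0 1" for w
    using that by force
  have "\<omega> holomorphic_on ball 0 1"
    unfolding \<omega>_def using hol nonzero by (intro holomorphic_intros) auto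
  moreover have "\<omega> 0 = 0"
    using h0 by (simp add: \<omega>_def)
  moreover have "norm (\<omega> w) < 1" if "norm w < 1" for w
    using less[of w] nonzero[of w] that by (simp add: \<omega>_def norm_divide divide_less_eq)
  ultimately have \<omega>_le: "norm (\<omega> z) \<le> norm z"
    using z by (intro Schwarz_Lemma(1)) auto
  have "(h z - 1) * (1 - \<omega> z) = 2 * \<omega> z"
    using nonzero[OF z] by (simp add: \<omega>_def field_simps)
  then have eq: "norm (h z - 1) * norm (1 - \<omega> z) = 2 * norm (\<omega> z)"
    by (metis norm_mult norm_numeral)
  have "norm (h z - 1) * (1 - norm z) \<le> norm (h z - 1) * norm (1 - \<omega> z)"
    using \<omega>_le norm_triangle_ineq2[of 1 "\<omega> z"] by (intro mult_left_mono) auto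
  also have "\<dots> = 2 * norm (\<omega> z)"
    by (fact eq)
  also have "\<dots> \<le> 2 * norm z"
    using \<omega>_le by simp
  finally show ?thesis
    using z by (simp add: pos_le_divide_eq)
qed

lemma norm_diff_one_le_if_Re_rotation_pos:
  fixes P :: "complex \<Rightarrow> complex" and s :: real
  assumes hol: "P holomorphic_on ball 0 1" and P0: "P 0 = 1"
    and Re_pos: "\<And>z. z \<in> ball 0 1 \<Longrightarrow> 0 < Re (P z * cis (- s))"
    and z: "z \<in> ball 0 1"
  shows "norm (P z - 1) \<le> 2 * cos s * norm z / (1 - norm z)"
proof -
  have cos_pos: "0 < cos s"
    using Re_pos[of 0] P0 by simp
  define h where "h w = (P w * cis (- s) + \<i> * sin s) / cos s" for w
  have "h holomorphic_on ball 0 1"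
    unfolding h_def using hol by (intro holomorphic_intros) (use cos_pos in auto)
  moreover have "h 0 = 1"
    using P0 cos_pos by (simp add: h_def cis.ctr complex_eq_iff)
  moreover have "0 < Re (h w)" if "w \<in> ball 0 1" for w
    using Re_pos[OF that] cos_pos by (simp add: h_def Re_divide_of_real)
  ultimately have h_bound: "cos s * norm (h z - 1) \<le> cos s * (2 * norm z / (1 - norm z))"
    using z cos_pos by (intro mult_left_mono norm_diff_one_le_if_Re_pos) auto
  have "cos s * (h z - 1) = (P z - 1) * cis (- s)"
    using cos_pos by (simp add: h_def field_simps) (simp add: cis.ctr complex_eq_iff algebra_simps)
  then have "P z - 1 = cis s * (cos s * (h z - 1))"
    by (simp add: mult.left_commute[of "cis s"] cis_mult)
  then show ?thesis
    using h_bound cos_pos by (simp add: norm_mult mult_ac)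
qed

lemma holomorphic_nonzero_if_Arg_ne_pi:
  fixes p :: "complex \<Rightarrow> complex"
  assumes hol: "p holomorphic_on S" and "open S" "connected S"
    and Arg: "\<And>z. z \<in> S \<Longrightarrow> Arg (p z) \<noteq> pi"
    and w: "w \<in> S" "p w \<noteq> 0" and z: "z \<in> S"
  shows "p z \<noteq> 0"
proof
  assume pz: "p z = 0"
  have "\<not> p constant_on S"
  proof
    assume "p constant_on S"
    then have "p w = p z"
      using w z by (auto simp: constant_on_def)
    then show False
      using pz w by simp
  qed
  then have "open (p ` S)"
    by (rule open_mapping_thm[OF hol assms(2,3,2) subset_refl])
  moreover have "0 \<in> p ` S"
    by (rule image_eqI[where x = z]) (use pz z in auto)
  ultimately obtain e where e: "e > 0" and ball: "ball 0 e \<subseteq> p ` S"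
    by (rule openE)
  have "- complex_of_real (e / 2) \<in> ball 0 e"
    using e by (simp add: dist_norm)
  then have "- complex_of_real (e / 2) \<in> p ` S"
    using ball by blast
  then obtain v where v: "- complex_of_real (e / 2) = p v" "v \<in> S"
    by (rule imageE)
  have "Arg (p v) = pi"
    unfolding v(1)[symmetric] using e by (simp add: Arg_eq_pi)
  then show False
    using Arg v(2) by blast
qed

lemma starq_holomorphic:
  fixes f :: "complex \<Rightarrow> complex"
  assumes hol: "f holomorphic_on S" and "open S"
    and f0: "f 0 = 0" and f'0: "deriv f 0 = 1"
    and nonzero: "\<And>z. z \<in> S \<Longrightarrow> z \<noteq> 0 \<Longrightarrow> f z \<noteq> 0"
  shows "starq f holomorphic_on S"
proof -
  define g where "g z = (if z = 0 then deriv f 0 else (f z - f 0) / (z - 0))" for z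
  have "g holomorphic_on S"
    unfolding g_def using pole_lemma_open[OF hol \<open>open S\<close>] .
  moreover have "g z \<noteq> 0" if "z \<in> S" for z
    using nonzero[OF that] f0 f'0 by (simp add: g_def)
  ultimately have "(\<lambda>z. deriv f z / g z) holomorphic_on S"
    using hol \<open>open S\<close> by (intro holomorphic_intros holomorphic_deriv)
  moreover have "starq f = (\<lambda>z. deriv f z / g z)"
    using f0 f'0 by (auto simp: fun_eq_iff g_def starq_def)
  ultimately show ?thesis
    by simp
qed

lemma cos_pi_half_mult_le_cos_half:
  fixes x :: real
  assumes "\<bar>x\<bar> \<le> 2"
  shows "cos (pi / 2 * x) \<le> cos (x / 2)"
proof -
  have "\<bar>x\<bar> * 1 \<le> \<bar>x\<bar> * pi" "pi * \<bar>x\<bar> \<le> pi * 2"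
    using assms pi_ge_two by (intro mult_left_mono; simp)+
  then have "\<bar>x / 2\<bar> \<le> \<bar>pi / 2 * x\<bar>" "\<bar>pi / 2 * x\<bar> \<le> pi"
    by (simp_all add: abs_mult mult.commute)
  then have "cos \<bar>pi / 2 * x\<bar> \<le> cos \<bar>x / 2\<bar>"
    by (intro cos_monotone_0_pi_le) auto
  then show ?thesis
    by (simp only: cos_abs_real)
qed

lemma angle_in_sector_imp_rotated_bound:
  fixes x a1 a2 :: real
  assumes "0 < a1" "0 < a2" "- (pi * a1 / 2) < x" "x < pi * a2 / 2"
  shows "\<bar>x / ((a1 + a2) / 2) - pi / 2 * ((a2 - a1) / (a2 + a1))\<bar> < pi / 2"
proof -
  have "x / (t / 2) - pi / 2 * (d / t) = (4 * x - pi * d) / (2 * t)" if "0 < t" for t d :: real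
    using that by (simp add: field_simps)
  then have "x / ((a1 + a2) / 2) - pi / 2 * ((a2 - a1) / (a2 + a1))
      = (4 * x - pi * (a2 - a1)) / (2 * (a1 + a2))"
    using assms by (metis add.commute add_pos_pos)
  moreover have "\<bar>4 * x - pi * (a2 - a1)\<bar> < pi * (a1 + a2)"
    using assms by (simp add: abs_less_iff algebra_simps)
  ultimately show ?thesis
    using assms by (simp add: abs_divide pos_divide_less_eq) (simp add: ring_distribs)
qed

lemma norm_root_diff_one_le_if_Arg_rotated:
  fixes p :: "complex \<Rightarrow> complex" and a s :: real
  assumes hol: "p holomorphic_on ball 0 1" and p0: "p 0 = 1"
    and off_cut: "\<And>z. z \<in> ball 0 1 \<Longrightarrow> p z \<notin> \<real>\<^sub>\<le>\<^sub>0"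
    and Arg: "\<And>z. z \<in> ball 0 1 \<Longrightarrow> \<bar>Arg (p z) / a - s\<bar> < pi / 2"
    and "0 < a" and z: "z \<in> ball 0 1"
  shows "norm (exp (Ln (p z) / complex_of_real a) - 1) \<le> 2 * cos s * norm z / (1 - norm z)"
proof (rule norm_diff_one_le_if_Re_rotation_pos[OF _ _ _ z])
  show "(\<lambda>z. exp (Ln (p z) / complex_of_real a)) holomorphic_on ball 0 1"
    using hol off_cut \<open>0 < a\<close> by (intro holomorphic_intros) auto
  show "exp (Ln (p 0) / complex_of_real a) = 1"
    using p0 by simp
next
  fix w :: complex
  assume w: "w \<in> ball 0 1"
  have "p w \<noteq> 0"
    using off_cut[OF w] by auto
  then have "Re (exp (Ln (p w) / complex_of_real a) * cis (- s))
      = exp (Re (Ln (p w)) / a) * cos (Arg (p w) / a - s)"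
    by (simp add: cis_conv_exp Re_exp Arg_eq_Im_Ln Re_divide_of_real Im_divide_of_real
        flip: exp_add)
  moreover have "0 < cos (Arg (p w) / a - s)"
    using Arg[OF w] unfolding abs_less_iff by (intro cos_gt_zero_pi) auto
  ultimately show "0 < Re (exp (Ln (p w) / complex_of_real a) * cis (- s))"
    by simp
qed

lemma Re_le_powr_if_norm_root_diff_one_le:
  fixes w :: complex and a d :: real
  assumes "0 < a" "norm (exp (Ln w / complex_of_real a) - 1) \<le> d"
  shows "Re w \<le> (1 + d) powr a"
proof (cases "w = 0")
  case True
  then show ?thesis
    by simp
next
  case False
  have "norm (exp (Ln w / complex_of_real a)) \<le> 1 + d"
    using assms(2) norm_triangle_ineq2[of "exp (Ln w / complex_of_real a)" 1] by simp
  then have "norm (exp (Ln w / complex_of_real a)) powr a \<le> (1 + d) powr a"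
    using assms(1) by (intro powr_mono2) auto
  moreover have "norm (exp (Ln w / complex_of_real a)) powr a = norm w"
    using False assms(1) by (simp add: Re_divide_of_real powr_def)
  ultimately show ?thesis
    using complex_Re_le_cmod[of w] by linarith
qed

lemma powr_le_Re_if_norm_root_diff_one_le:
  fixes w :: complex and a d :: real
  assumes a: "0 < a" "a \<le> 1" and w: "0 < Re w" "\<bar>Arg w\<bar> < a * pi"
    and d: "norm (exp (Ln w / complex_of_real a) - 1) \<le> d" "d \<le> 1"
  shows "(1 - d) powr a \<le> Re w"
proof (cases "d = 1")
  case True
  then show ?thesis
    using w by simp
next
  case False
  define \<zeta> where "\<zeta> = Ln w / complex_of_real a"
  have "w \<noteq> 0"
    using w by auto
  have "1 - d \<le> Re (exp \<zeta>)"
    using d abs_Re_le_cmod[of "exp \<zeta> - 1"] by (simp add: \<zeta>_def)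
  then have "0 < exp (Re \<zeta>) * cos (Im \<zeta>)"
    using False d by (simp add: Re_exp)
  then have "0 < cos (Im \<zeta>)"
    by (simp add: zero_less_mult_iff)
  moreover have "\<bar>Im \<zeta>\<bar> < pi"
    using \<open>w \<noteq> 0\<close> a w
    by (simp add: \<zeta>_def Im_divide_of_real Arg_eq_Im_Ln abs_divide pos_divide_less_eq mult.commute)
  ultimately have Im_\<zeta>: "\<bar>Im \<zeta>\<bar> < pi / 2"
    using cos_monotone_0_pi_le[of "pi / 2" "\<bar>Im \<zeta>\<bar>"] by force
  have "(1 - d) powr a \<le> Re (exp \<zeta>) powr a"
    using \<open>1 - d \<le> Re (exp \<zeta>)\<close> d a by (intro powr_mono2) auto
  also have "\<dots> \<le> Re (exp (a *\<^sub>R \<zeta>))"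
    using Re_exp_powr_le_Re_exp_scaleR[OF a Im_\<zeta>] .
  also have "exp (a *\<^sub>R \<zeta>) = w"
    using \<open>w \<noteq> 0\<close> a by (simp add: \<zeta>_def scaleR_conv_of_real)
  finally show ?thesis .
qed

lemma St_imp_starq_holomorphic:
  assumes "f \<in> St a1 a2"
  shows "starq f holomorphic_on ball 0 1"
  using assms by (intro starq_holomorphic) (auto simp: St_def)

lemma St_imp_Re_starq_pos:
  assumes "f \<in> St a1 a2" "a1 \<le> 1" "a2 \<le> 1" and z: "z \<in> ball 0 1"
  shows "0 < Re (starq f z)"
proof -
  have "\<bar>Arg (starq f w)\<bar> < pi / 2" if "w \<in> ball 0 1" for w
  proof -
    have "pi * a1 / 2 \<le> pi / 2" "pi * a2 / 2 \<le> pi / 2"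
      using assms(2,3) by (simp_all add: mult_left_le)
    moreover have "- (pi * a1 / 2) < Arg (starq f w)" "Arg (starq f w) < pi * a2 / 2"
      using assms(1) that by (auto simp: St_def)
    ultimately show ?thesis
      unfolding abs_less_iff by linarith
  qed
  moreover have "starq f z \<noteq> 0"
  proof (rule holomorphic_nonzero_if_Arg_ne_pi[OF St_imp_starq_holomorphic[OF assms(1)], where w = 0])
    show "Arg (starq f w) \<noteq> pi" if "w \<in> ball 0 1" for w
      using calculation[OF that] by auto
  qed (use z in \<open>auto simp: starq_def\<close>)
  ultimately show ?thesis
    using z Arg_Re_pos by blast
qed

lemma St_imp_abs_Arg_starq_less:
  assumes "f \<in> St a1 a2" "0 < a1" "0 < a2" "z \<in> ball 0 1"
  shows "\<bar>Arg (starq f z)\<bar> < (a1 + a2) / 2 * pi"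
proof -
  have "(a1 + a2) / 2 * pi = pi * a1 / 2 + pi * a2 / 2" "0 < pi * a1" "0 < pi * a2"
    using assms(2,3) by (simp_all add: field_simps)
  moreover have "- (pi * a1 / 2) < Arg (starq f z)" "Arg (starq f z) < pi * a2 / 2"
    using assms(1,4) by (auto simp: St_def)
  ultimately show ?thesis
    unfolding abs_less_iff by linarith
qed

lemma St_imp_norm_root_starq_diff_one_le:
  assumes "f \<in> St a1 a2" "0 < a1" "a1 \<le> 1" "0 < a2" "a2 \<le> 1" and z: "z \<in> ball 0 1"
  shows "norm (exp (Ln (starq f z) / complex_of_real ((a1 + a2) / 2)) - 1)
           \<le> 2 * cos (pi / 2 * ((a2 - a1) / (a2 + a1))) * norm z / (1 - norm z)"
proof (rule norm_root_diff_one_le_if_Arg_rotated[OF St_imp_starq_holomorphic[OF assms(1)] _ _ _ _ z])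
  show "starq f w \<notin> \<real>\<^sub>\<le>\<^sub>0" if "w \<in> ball 0 1" for w
    using St_imp_Re_starq_pos[OF assms(1,3,5) that] by (auto simp: complex_nonpos_Reals_iff)
  show "\<bar>Arg (starq f w) / ((a1 + a2) / 2) - pi / 2 * ((a2 - a1) / (a2 + a1))\<bar> < pi / 2"
    if "w \<in> ball 0 1" for w
    using assms(1,2,4) that by (intro angle_in_sector_imp_rotated_bound) (auto simp: St_def)
qed (use assms in \<open>auto simp: starq_def\<close>)

theorem theorem2p1:
  fixes a1 a2 :: real and f :: "complex \<Rightarrow> complex"
  assumes "0 < a1" "a1 \<le> 1" "0 < a2" "a2 \<le> 1"
    and "f \<in> St a1 a2"
  defines "\<theta> \<equiv> (a2 - a1) / (a2 + a1)"
  shows "(\<forall>z\<in>ball 0 1. norm z \<le> 1 / (2 * cos (\<theta> / 2) + 1) \<longrightarrow>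
            Re (starq f z) \<ge> ((1 - (2 * cos (\<theta> / 2) + 1) * norm z) / (1 - norm z)) powr ((a1 + a2) / 2)) \<and>
         (\<forall>z\<in>ball 0 1. 0 < Re (starq f z) \<and>
            Re (starq f z) \<le> ((1 + (2 * cos (\<theta> / 2) - 1) * norm z) / (1 - norm z)) powr ((a1 + a2) / 2))"
proof (intro conjI ballI impI)
  define c where "c = cos (\<theta> / 2)"
  have "\<bar>\<theta>\<bar> \<le> 1"
    using assms(1,3) by (simp add: \<theta>_def abs_divide)
  then have c: "cos (pi / 2 * \<theta>) \<le> c" "0 < c"
    using cos_pi_half_mult_le_cos_half[of \<theta>] pi_gt3 by (auto simp: c_def intro!: cos_gt_zero_pi)
  fix z :: complex
  assume z: "z \<in> ball 0 1"
  define d where "d = 2 * c * norm z / (1 - norm z)"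
  have bound: "norm (exp (Ln (starq f z) / complex_of_real ((a1 + a2) / 2)) - 1) \<le> d"
    using St_imp_norm_root_starq_diff_one_le[OF assms(5,1-4) z] c z
    by (simp add: d_def \<theta>_def divide_right_mono mult_right_mono order_trans)
  show "0 < Re (starq f z)"
    using St_imp_Re_starq_pos[OF assms(5,2,4) z] .
  have "1 + d = (1 + (2 * c - 1) * norm z) / (1 - norm z)"
    using z by (simp add: d_def field_simps)
  then show "Re (starq f z) \<le> ((1 + (2 * cos (\<theta> / 2) - 1) * norm z) / (1 - norm z)) powr ((a1 + a2) / 2)"
    using Re_le_powr_if_norm_root_diff_one_le[OF _ bound] assms(1,3) by (simp add: c_def)
  assume "norm z \<le> 1 / (2 * cos (\<theta> / 2) + 1)"
  then have "d \<le> 1"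
    using z c by (simp add: d_def c_def field_simps)
  moreover have "1 - d = (1 - (2 * c + 1) * norm z) / (1 - norm z)"
    using z by (simp add: d_def field_simps)
  ultimately show "((1 - (2 * cos (\<theta> / 2) + 1) * norm z) / (1 - norm z)) powr ((a1 + a2) / 2) \<le> Re (starq f z)"
    using powr_le_Re_if_norm_root_diff_one_le[OF _ _ _ _ bound] assms
      St_imp_Re_starq_pos[OF assms(5,2,4) z] St_imp_abs_Arg_starq_less[OF assms(5,1,3) z]
    by (simp add: c_def)
qed

end
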